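(* Suppose Assumption A2 holds. Then for any $\boldsymbol{\alpha}\in\mathcal{A}$, $\Phi(\cdot\,;\boldsymbol{\alpha})$ is $\mu_\Phi$-strongly concave on $\mathcal{X}$, where $\mu_\Phi:=\frac{\epsilon+\mu M_{\min}}{2}$ and $M_{\min}=\min_{r=1,\dots,n} M_r$, with $M_r$ the number of links that user $r$ exclusively occupies (links in $\mathcal{L}_r$ used by no other user).
   Context: Network: $n$ users, a finite set of links $\mathcal{L}$; user $r$ uses the set of links $\mathcal{L}_r\subseteq\mathcal{L}$. For each user $r$, a true utility $\widetilde U_r:\mathbb{R}_{>0}\to\mathbb{R}$ and a surrogate utility $U_r(x;\alpha_r)$ ($x>0$, $\alpha_r\in\mathbb{R}$), twice continuously differentiable. Each link $l$ has a twice continuously differentiable $B_l:\mathbb{R}\to\mathbb{R}$. Fix $\epsilon>0$; $\mathcal{A}=\mathcal{A}_1\times\dots\times\mathcal{A}_n$, each $\mathcal{A}_r\subset\mathbb{R}$ closed, convex, bounded. Define $\Phi(\mathbf{x};\boldsymbol{\alpha}) = \sum_{r=1}^n (U_r(x_r;\alpha_r) -\frac{\epsilon x_r^2}{2})-\sum_{l\in\mathcal{L}}B_l(\sum_{i:l\in\mathcal{L}_i}x_i)$. Given constants $0<\delta<b$, let $\mathcal{X}=\{\mathbf{x}:\delta/2<x_r<2b,\ r=1,\dots,n\}$. Assumption A2: for all $\boldsymbol{\alpha}\in\mathcal{A}$, $\mathbf{x}\in\mathcal{X}$: $U_r(\cdot;\alpha_r)$ is concave and each $B_l$ is $\mu$-strongly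 convex; $\widetilde U_r$, $\nabla\widetilde U_r$, $\nabla_xU_r$, $\nabla_\alpha\nabla_xU_r$, $\nabla_x^2U_r$ are $L_u$-Lipschitz; $\nabla B_l$ and $\nabla^2 B_l$ are $L_b$-Lipschitz. *)

theory Defs
  imports "HOL-Analysis.Analysis"
begin

definition strongly_convex_on :: "'a::real_normed_vector set \<Rightarrow> real \<Rightarrow> ('a \<Rightarrow> real) \<Rightarrow> bool"
  where "strongly_convex_on S m f \<longleftrightarrow> convex S \<and>
    (\<forall>x\<in>S. \<forall>y\<in>S. \<forall>t\<in>{0..1}.
       f ((1 - t) *\<^sub>R x + t *\<^sub>R y) \<le> (1 - t) * f x + t * f y - m / 2 * t * (1 - t) * (norm (x - y))\<^sup>2)"

definition strongly_concave_on :: "'a::real_normed_vector set \<Rightarrow> real \<Rightarrow> ('a \<Rightarrow> real) \<Rightarrow> bool"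
  where "strongly_concave_on S m f \<longleftrightarrow> strongly_convex_on S m (\<lambda>x. - f x)"

definition C2_on :: "'a::euclidean_space set \<Rightarrow> ('a \<Rightarrow> real) \<Rightarrow> bool"
  where "C2_on S g \<longleftrightarrow> (\<exists>(g' :: 'a \<Rightarrow> ('a \<Rightarrow>\<^sub>L real)) (g'' :: 'a \<Rightarrow> ('a \<Rightarrow>\<^sub>L ('a \<Rightarrow>\<^sub>L real))).
      (\<forall>z\<in>S. (g has_derivative blinfun_apply (g' z)) (at z)) \<and>
      (\<forall>z\<in>S. (g' has_derivative blinfun_apply (g'' z)) (at z)) \<and>
      continuous_on S g'')"

text \<open>Users are indexed by the finite type 'n (n = CARD('n)); links have type 'l.
  U r x a = U_r(x; alpha_r); Lr r = the link set of user r.\<close>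

definition Phi :: "('n::finite \<Rightarrow> real \<Rightarrow> real \<Rightarrow> real) \<Rightarrow> ('l \<Rightarrow> real \<Rightarrow> real) \<Rightarrow> real
    \<Rightarrow> 'l set \<Rightarrow> ('n \<Rightarrow> 'l set) \<Rightarrow> real^'n \<Rightarrow> real^'n \<Rightarrow> real"
  where "Phi U B \<epsilon> L Lr x \<alpha> =
    (\<Sum>r\<in>UNIV. U r (x$r) (\<alpha>$r) - \<epsilon> * (x$r)\<^sup>2 / 2)
    - (\<Sum>l\<in>L. B l (\<Sum>i\<in>{i. l \<in> Lr i}. x$i))"

definition Xset :: "real \<Rightarrow> real \<Rightarrow> (real^'n::finite) set"
  where "Xset \<delta> b = {x. \<forall>r. \<delta> / 2 < x$r \<and> x$r < 2 * b}"

definition loads :: "('n::finite \<Rightarrow> 'l set) \<Rightarrow> real \<Rightarrow> real \<Rightarrow> 'l \<Rightarrow> real set"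
  where "loads Lr \<delta> b l = (\<lambda>x. \<Sum>i\<in>{i. l \<in> Lr i}. x$i) ` Xset \<delta> b"

definition Mexcl :: "('n \<Rightarrow> 'l set) \<Rightarrow> 'n \<Rightarrow> nat"
  where "Mexcl Lr r = card {l \<in> Lr r. \<forall>i. i \<noteq> r \<longrightarrow> l \<notin> Lr i}"

definition Mmin :: "('n::finite \<Rightarrow> 'l set) \<Rightarrow> nat"
  where "Mmin Lr = Min (range (Mexcl Lr))"

definition Ux :: "('n \<Rightarrow> real \<Rightarrow> real \<Rightarrow> real) \<Rightarrow> 'n \<Rightarrow> real \<Rightarrow> real \<Rightarrow> real"
  where "Ux U r x a = deriv (\<lambda>y. U r y a) x"

definition Uxx :: "('n \<Rightarrow> real \<Rightarrow> real \<Rightarrow> real) \<Rightarrow> 'n \<Rightarrow> real \<Rightarrow> real \<Rightarrow> real"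
  where "Uxx U r x a = deriv (\<lambda>y. Ux U r y a) x"

definition Uxa :: "('n \<Rightarrow> real \<Rightarrow> real \<Rightarrow> real) \<Rightarrow> 'n \<Rightarrow> real \<Rightarrow> real \<Rightarrow> real"
  where "Uxa U r x a = deriv (\<lambda>c. Ux U r x c) a"

end

theory Submission
  imports Defs
begin

text \<open>The potential splits into the concave utilities, the penalty \<open>-\<epsilon>/2 \<parallel>x\<parallel>\<^sup>2\<close> and the link
  costs. The penalty is \<open>\<epsilon>\<close>-strongly concave, and composing each \<open>\<mu>\<close>-strongly convex
  link cost with its load gives a curvature of \<open>\<mu> (load(x) - load(y))\<^sup>2\<close>. A link used by
  user \<open>r\<close> alone carries the load \<open>x\<^sub>r\<close>, so summing over links gives at least
  \<open>\<mu> M\<^sub>m\<^sub>i\<^sub>n \<parallel>x - y\<parallel>\<^sup>2\<close>. Hence the potential is even \<open>(\<epsilon> + \<mu> M\<^sub>m\<^sub>i\<^sub>n)\<close>-strongly concave.\<close>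

lemma norm_convex_combination_squared:
  fixes x y :: "'a::real_inner"
  shows "(norm ((1 - t) *\<^sub>R x + t *\<^sub>R y))\<^sup>2
    = (1 - t) * (norm x)\<^sup>2 + t * (norm y)\<^sup>2 - t * (1 - t) * (norm (x - y))\<^sup>2"
  by (simp add: power2_norm_eq_inner inner_add inner_diff inner_commute algebra_simps)

lemma strongly_convex_onD:
  assumes "strongly_convex_on S m f" "x \<in> S" "y \<in> S" "0 \<le> t" "t \<le> 1"
  shows "f ((1 - t) *\<^sub>R x + t *\<^sub>R y) \<le> (1 - t) * f x + t * f y - m / 2 * t * (1 - t) * (norm (x - y))\<^sup>2"
  using assms unfolding strongly_convex_on_def by auto

lemma strongly_convex_onI:
  assumes "convex S"
    and "\<And>x y t. x \<in> S \<Longrightarrow> y \<in> S \<Longrightarrow> 0 \<le> t \<Longrightarrow> t \<le> 1 \<Longrightarrow>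
      f ((1 - t) *\<^sub>R x + t *\<^sub>R y) \<le> (1 - t) * f x + t * f y - m / 2 * t * (1 - t) * (norm (x - y))\<^sup>2"
  shows "strongly_convex_on S m f"
  using assms unfolding strongly_convex_on_def by auto

lemma strongly_convex_on_imp_convex: "strongly_convex_on S m f \<Longrightarrow> convex S"
  unfolding strongly_convex_on_def by blast

lemma strongly_convex_on_0_iff: "strongly_convex_on S 0 f \<longleftrightarrow> convex_on S f"
  by (auto simp: strongly_convex_on_def intro: convex_onI dest: convex_on_imp_convex convex_onD)

lemma strongly_convex_on_add:
  assumes f: "strongly_convex_on S m f" and g: "strongly_convex_on S m' g"
  shows "strongly_convex_on S (m + m') (\<lambda>x. f x + g x)"
proof (rule strongly_convex_onI)
  show "convex S" using strongly_convex_on_imp_convex[OF f] .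
next
  fix x y and t :: real
  assume xy: "x \<in> S" "y \<in> S" and t: "0 \<le> t" "t \<le> 1"
  show "f ((1 - t) *\<^sub>R x + t *\<^sub>R y) + g ((1 - t) *\<^sub>R x + t *\<^sub>R y)
      \<le> (1 - t) * (f x + g x) + t * (f y + g y) - (m + m') / 2 * t * (1 - t) * (norm (x - y))\<^sup>2"
    using strongly_convex_onD[OF f xy t] strongly_convex_onD[OF g xy t]
    by (simp add: add_divide_distrib distrib_left distrib_right)
qed

lemma strongly_convex_on_le:
  assumes f: "strongly_convex_on S m f" and "m' \<le> m"
  shows "strongly_convex_on S m' f"
proof (rule strongly_convex_onI)
  show "convex S" using strongly_convex_on_imp_convex[OF f] .
next
  fix x y and t :: real
  assume xy: "x \<in> S" "y \<in> S" and t: "0 \<le> t" "t \<le> 1"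
  have "m' / 2 * (t * (1 - t) * (norm (x - y))\<^sup>2) \<le> m / 2 * (t * (1 - t) * (norm (x - y))\<^sup>2)"
    using t \<open>m' \<le> m\<close> by (intro mult_right_mono) auto
  then show "f ((1 - t) *\<^sub>R x + t *\<^sub>R y) \<le> (1 - t) * f x + t * f y - m' / 2 * t * (1 - t) * (norm (x - y))\<^sup>2"
    using strongly_convex_onD[OF f xy t] by (simp add: mult.assoc)
qed

lemma strongly_convex_on_scaled_norm_squared:
  fixes S :: "'a::real_inner set"
  assumes "convex S"
  shows "strongly_convex_on S m (\<lambda>x. m / 2 * (norm x)\<^sup>2)"
  using assms
  by (intro strongly_convex_onI) (simp_all only: norm_convex_combination_squared, simp add: field_simps)

lemma concave_on_sum_coordinates:
  fixes f :: "'n::finite \<Rightarrow> real \<Rightarrow> real"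
  assumes "convex I" and "\<And>r. concave_on I (f r)"
  shows "concave_on {x::real^'n. \<forall>r. x$r \<in> I} (\<lambda>x. \<Sum>r\<in>UNIV. f r (x$r))"
  unfolding concave_on_iff
proof (intro conjI ballI allI impI)
  show "convex {x::real^'n. \<forall>r. x$r \<in> I}"
    using \<open>convex I\<close> by (intro convex_box_cart) simp
next
  fix x y :: "real^'n" and u v :: real
  assume "x \<in> {x. \<forall>r. x$r \<in> I}" "y \<in> {x. \<forall>r. x$r \<in> I}" "0 \<le> u" "0 \<le> v" "u + v = 1"
  then show "u * (\<Sum>r\<in>UNIV. f r (x$r)) + v * (\<Sum>r\<in>UNIV. f r (y$r))
      \<le> (\<Sum>r\<in>UNIV. f r ((u *\<^sub>R x + v *\<^sub>R y)$r))"
    using assms(2) unfolding sum_distrib_left sum.distrib[symmetric] concave_on_iff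
    by (intro sum_mono) simp
qed

definition link_load :: "('n::finite \<Rightarrow> 'l set) \<Rightarrow> 'l \<Rightarrow> real^'n \<Rightarrow> real"
  where "link_load Lr l x = (\<Sum>i\<in>{i. l \<in> Lr i}. x$i)"

definition exclusive_links :: "('n \<Rightarrow> 'l set) \<Rightarrow> 'n \<Rightarrow> 'l set"
  where "exclusive_links Lr r = {l \<in> Lr r. \<forall>i. i \<noteq> r \<longrightarrow> l \<notin> Lr i}"

lemma linear_link_load: "linear (link_load Lr l)"
  unfolding link_load_def by (intro linearI) (simp_all add: sum.distrib sum_distrib_left)

lemma loads_eq_link_load_image: "loads Lr \<delta> b l = link_load Lr l ` Xset \<delta> b"
  unfolding loads_def link_load_def ..

lemma link_load_exclusive:
  assumes "l \<in> exclusive_links Lr r"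
  shows "link_load Lr l x = x$r"
proof -
  from assms have "{i. l \<in> Lr i} = {r}"
    unfolding exclusive_links_def by auto
  then show ?thesis
    unfolding link_load_def by simp
qed

lemma Mexcl_eq_card_exclusive_links: "Mexcl Lr r = card (exclusive_links Lr r)"
  unfolding Mexcl_def exclusive_links_def ..

lemma Mmin_le_Mexcl: "Mmin Lr \<le> Mexcl Lr r"
  unfolding Mmin_def by (rule Min_le) auto

lemma Mmin_norm_squared_le_sum_link_load_squared:
  fixes Lr :: "'n::finite \<Rightarrow> 'l set"
  assumes "finite L" and "\<And>r. Lr r \<subseteq> L"
  shows "real (Mmin Lr) * (norm v)\<^sup>2 \<le> (\<Sum>l\<in>L. (link_load Lr l v)\<^sup>2)"
proof -
  let ?E = "exclusive_links Lr"
  have E_sub: "?E r \<subseteq> L" for r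
    using assms(2) unfolding exclusive_links_def by blast
  have E_finite: "finite (?E r)" for r
    using finite_subset[OF E_sub assms(1)] .
  have E_disjoint: "?E r \<inter> ?E r' = {}" if "r \<noteq> r'" for r r'
    using that unfolding exclusive_links_def by auto
  have "real (Mmin Lr) * (norm v)\<^sup>2 = (\<Sum>r\<in>UNIV. real (Mmin Lr) * (v$r)\<^sup>2)"
    by (simp add: norm_vec_def L2_set_def sum_nonneg sum_distrib_left)
  also have "\<dots> \<le> (\<Sum>r\<in>UNIV. real (card (?E r)) * (v$r)\<^sup>2)"
    by (intro sum_mono mult_right_mono)
      (simp_all add: Mmin_le_Mexcl[of Lr, unfolded Mexcl_eq_card_exclusive_links])
  also have "\<dots> = (\<Sum>r\<in>UNIV. \<Sum>l\<in>?E r. (link_load Lr l v)\<^sup>2)"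
    by (simp add: link_load_exclusive)
  also have "\<dots> = (\<Sum>l\<in>(\<Union>r. ?E r). (link_load Lr l v)\<^sup>2)"
    using E_finite E_disjoint by (simp add: sum.UNION_disjoint)
  also have "\<dots> \<le> (\<Sum>l\<in>L. (link_load Lr l v)\<^sup>2)"
    using E_sub by (intro sum_mono2 assms(1)) auto
  finally show ?thesis .
qed

lemma strongly_convex_on_sum_link_costs:
  fixes Lr :: "'n::finite \<Rightarrow> 'l set" and S :: "(real^'n) set"
  assumes "finite L" and "\<And>r. Lr r \<subseteq> L" and "convex S" and "\<mu> \<ge> 0"
    and B: "\<And>l. l \<in> L \<Longrightarrow> strongly_convex_on (link_load Lr l ` S) \<mu> (B l)"
  shows "strongly_convex_on S (\<mu> * real (Mmin Lr)) (\<lambda>x. \<Sum>l\<in>L. B l (link_load Lr l x))"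
proof (rule strongly_convex_onI[OF \<open>convex S\<close>])
  fix x y and t :: real
  assume x: "x \<in> S" and y: "y \<in> S" and t: "0 \<le> t" "t \<le> 1"
  define z where "z = (1 - t) *\<^sub>R x + t *\<^sub>R y"
  let ?d = "\<lambda>l. link_load Lr l x - link_load Lr l y"
  have load_z: "link_load Lr l z = (1 - t) *\<^sub>R link_load Lr l x + t *\<^sub>R link_load Lr l y" for l
    unfolding z_def by (simp add: linear_add[OF linear_link_load] linear_scale[OF linear_link_load])
  have "(\<Sum>l\<in>L. B l (link_load Lr l z))
      \<le> (\<Sum>l\<in>L. (1 - t) * B l (link_load Lr l x) + t * B l (link_load Lr l y) - \<mu> / 2 * t * (1 - t) * (?d l)\<^sup>2)"
  proof (rule sum_mono)
    fix l assume "l \<in> L"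
    from strongly_convex_onD[OF B[OF this] imageI[OF x] imageI[OF y] t]
    show "B l (link_load Lr l z)
        \<le> (1 - t) * B l (link_load Lr l x) + t * B l (link_load Lr l y) - \<mu> / 2 * t * (1 - t) * (?d l)\<^sup>2"
      by (simp add: load_z)
  qed
  also have "\<dots> = (1 - t) * (\<Sum>l\<in>L. B l (link_load Lr l x)) + t * (\<Sum>l\<in>L. B l (link_load Lr l y))
      - \<mu> / 2 * t * (1 - t) * (\<Sum>l\<in>L. (?d l)\<^sup>2)"
    by (simp add: sum.distrib sum_subtractf sum_distrib_left)
  also have "\<dots> \<le> (1 - t) * (\<Sum>l\<in>L. B l (link_load Lr l x)) + t * (\<Sum>l\<in>L. B l (link_load Lr l y))
      - \<mu> * real (Mmin Lr) / 2 * t * (1 - t) * (norm (x - y))\<^sup>2"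
  proof -
    have "real (Mmin Lr) * (norm (x - y))\<^sup>2 \<le> (\<Sum>l\<in>L. (?d l)\<^sup>2)"
      using Mmin_norm_squared_le_sum_link_load_squared[OF assms(1,2), where v = "x - y"]
      by (simp add: linear_diff[OF linear_link_load])
    then have "\<mu> / 2 * t * (1 - t) * (real (Mmin Lr) * (norm (x - y))\<^sup>2)
        \<le> \<mu> / 2 * t * (1 - t) * (\<Sum>l\<in>L. (?d l)\<^sup>2)"
      using t \<open>\<mu> \<ge> 0\<close> by (intro mult_left_mono) auto
    then show ?thesis by (simp add: algebra_simps)
  qed
  finally show "(\<Sum>l\<in>L. B l (link_load Lr l z)) \<le> (1 - t) * (\<Sum>l\<in>L. B l (link_load Lr l x))
      + t * (\<Sum>l\<in>L. B l (link_load Lr l y)) - \<mu> * real (Mmin Lr) / 2 * t * (1 - t) * (norm (x - y))\<^sup>2" .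
qed

theorem proposition2:
  fixes U :: "'n::finite \<Rightarrow> real \<Rightarrow> real \<Rightarrow> real"
    and Ut :: "'n \<Rightarrow> real \<Rightarrow> real"
    and B :: "'l \<Rightarrow> real \<Rightarrow> real"
    and L :: "'l set" and Lr :: "'n \<Rightarrow> 'l set"
    and A :: "'n \<Rightarrow> real set"
    and \<epsilon> \<delta> b \<mu> Lu Lb :: real
    and \<alpha> :: "real^'n"
  assumes finL: "finite L" and Lr_sub: "\<And>r. Lr r \<subseteq> L"
    and eps: "\<epsilon> > 0" and delta: "0 < \<delta>" "\<delta> < b"
    and A_closed: "\<And>r. closed (A r)" and A_convex: "\<And>r. convex (A r)"
    and A_bounded: "\<And>r. bounded (A r)"
    and U_C2: "\<And>r. C2_on ({0<..} \<times> UNIV) (\<lambda>(x, a). U r x a)"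
    and Ut_C2: "\<And>r. C2_on {0<..} (Ut r)"
    and B_C2: "\<And>l. C2_on UNIV (B l)"
    and mu: "\<mu> > 0"
    (* Assumption A2 *)
    and U_concave: "\<And>r a. a \<in> A r \<Longrightarrow> concave_on {\<delta>/2<..<2*b} (\<lambda>x. U r x a)"
    and B_strong: "\<And>l. l \<in> L \<Longrightarrow> strongly_convex_on (loads Lr \<delta> b l) \<mu> (B l)"
    and Ut_lip: "\<And>r. Lu-lipschitz_on {\<delta>/2<..<2*b} (Ut r)"
    and dUt_lip: "\<And>r. Lu-lipschitz_on {\<delta>/2<..<2*b} (deriv (Ut r))"
    and Ux_lip: "\<And>r. Lu-lipschitz_on ({\<delta>/2<..<2*b} \<times> A r) (\<lambda>(x, a). Ux U r x a)"
    and Uxa_lip: "\<And>r. Lu-lipschitz_on ({\<delta>/2<..<2*b} \<times> A r) (\<lambda>(x, a). Uxa U r x a)"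
    and Uxx_lip: "\<And>r. Lu-lipschitz_on ({\<delta>/2<..<2*b} \<times> A r) (\<lambda>(x, a). Uxx U r x a)"
    and dB_lip: "\<And>l. l \<in> L \<Longrightarrow> Lb-lipschitz_on (loads Lr \<delta> b l) (deriv (B l))"
    and ddB_lip: "\<And>l. l \<in> L \<Longrightarrow> Lb-lipschitz_on (loads Lr \<delta> b l) (deriv (deriv (B l)))"
    and alpha: "\<And>r. \<alpha>$r \<in> A r"
  shows "strongly_concave_on (Xset \<delta> b) ((\<epsilon> + \<mu> * real (Mmin Lr)) / 2)
           (\<lambda>x. Phi U B \<epsilon> L Lr x \<alpha>)"
proof -
  have X_box: "Xset \<delta> b = {x::real^'n. \<forall>r. x$r \<in> {\<delta>/2<..<2*b}}"
    by (auto simp: Xset_def)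
  have convex_X: "convex (Xset \<delta> b :: (real^'n) set)"
    unfolding X_box by (rule convex_box_cart) (simp only: Collect_mem_eq convex_real_interval)
  have utilities: "strongly_convex_on (Xset \<delta> b) 0 (\<lambda>x. - (\<Sum>r\<in>UNIV. U r (x$r) (\<alpha>$r)))"
    using concave_on_sum_coordinates[of "{\<delta>/2<..<2*b}" "\<lambda>r x. U r x (\<alpha>$r)"] U_concave[OF alpha]
    unfolding strongly_convex_on_0_iff X_box concave_on_def by simp
  have penalty: "strongly_convex_on (Xset \<delta> b :: (real^'n) set) \<epsilon> (\<lambda>x. \<epsilon> / 2 * (norm x)\<^sup>2)"
    using strongly_convex_on_scaled_norm_squared[OF convex_X] .
  have links: "strongly_convex_on (Xset \<delta> b) (\<mu> * real (Mmin Lr)) (\<lambda>x. \<Sum>l\<in>L. B l (link_load Lr l x))"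
    using strongly_convex_on_sum_link_costs[where Lr = Lr, OF finL Lr_sub convex_X] mu B_strong
    by (simp add: loads_eq_link_load_image)
  have Phi_eq: "- Phi U B \<epsilon> L Lr x \<alpha>
      = - (\<Sum>r\<in>UNIV. U r (x$r) (\<alpha>$r)) + \<epsilon> / 2 * (norm x)\<^sup>2 + (\<Sum>l\<in>L. B l (link_load Lr l x))" for x
    by (simp add: Phi_def link_load_def norm_vec_def L2_set_def sum_nonneg sum_subtractf
        sum_divide_distrib sum_distrib_left)
  have "strongly_convex_on (Xset \<delta> b) (\<epsilon> + \<mu> * real (Mmin Lr)) (\<lambda>x. - Phi U B \<epsilon> L Lr x \<alpha>)"
    using strongly_convex_on_add[OF strongly_convex_on_add[OF utilities penalty] links]
    unfolding Phi_eq by simp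
  then show ?thesis
    unfolding strongly_concave_on_def by (rule strongly_convex_on_le) (use eps mu in simp)
qed

end
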